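(* The Nielsen–Schreier theorem — "for every set $A$ and every subgroup $H$ of the free group $F_A$ on $A$, there exists a subset of $H$ that freely generates $H$" — is false in the internal logic of the topos of nominal sets.
   Context: Work in a classical metatheory. Fix a countably infinite set $\mathbb{A}$ and let $\mathrm{Perm}(\mathbb{A})$ be the group of finitely supported permutations of $\mathbb{A}$ (bijections $\pi$ with $\pi(a)=a$ for all but finitely many $a$). For a $\mathrm{Perm}(\mathbb{A})$-set $(X,\cdot)$, a subset $S\subseteq\mathbb{A}$ supports $x\in X$ if $\pi\cdot x = x$ for every $\pi$ fixing all elements of $S$. The topos of nominal sets is the full subcategory of $\mathrm{Perm}(\mathbb{A})$-sets in which every element has a finite support. Free groups are understood in the usual sense (reduced words); a subset freely generates a group if the induced homomorphism from the free group on that subset is an isomorphism. *)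

theory Defs
  imports "HOL-Algebra.Group" "HOL-Algebra.Generated_Groups"
begin

type_synonym atom = nat

definition fsperm :: "(atom \<Rightarrow> atom) \<Rightarrow> bool" where
  "fsperm \<pi> \<longleftrightarrow> bij \<pi> \<and> finite {a. \<pi> a \<noteq> a}"

definition perm_set :: "'x set \<Rightarrow> ((atom \<Rightarrow> atom) \<Rightarrow> 'x \<Rightarrow> 'x) \<Rightarrow> bool" where
  "perm_set X act \<longleftrightarrow>
     (\<forall>\<pi> x. fsperm \<pi> \<and> x \<in> X \<longrightarrow> act \<pi> x \<in> X) \<and>
     (\<forall>x\<in>X. act id x = x) \<and>
     (\<forall>\<pi> \<sigma> x. fsperm \<pi> \<and> fsperm \<sigma> \<and> x \<in> X \<longrightarrow> act (\<pi> \<circ> \<sigma>) x = act \<pi> (act \<sigma> x))"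

definition supports :: "((atom \<Rightarrow> atom) \<Rightarrow> 'x \<Rightarrow> 'x) \<Rightarrow> atom set \<Rightarrow> 'x \<Rightarrow> bool" where
  "supports act S x \<longleftrightarrow> (\<forall>\<pi>. fsperm \<pi> \<and> (\<forall>a\<in>S. \<pi> a = a) \<longrightarrow> act \<pi> x = x)"

definition nominal_set :: "'x set \<Rightarrow> ((atom \<Rightarrow> atom) \<Rightarrow> 'x \<Rightarrow> 'x) \<Rightarrow> bool" where
  "nominal_set X act \<longleftrightarrow> perm_set X act \<and> (\<forall>x\<in>X. \<exists>S. finite S \<and> supports act S x)"

text \<open>Pointwise action on subsets; a subset is finitely supported if it has a finite
  support for this action (i.e. it is an element of the power object).\<close>
definition set_act :: "((atom \<Rightarrow> atom) \<Rightarrow> 'x \<Rightarrow> 'x) \<Rightarrow> (atom \<Rightarrow> atom) \<Rightarrow> 'x set \<Rightarrow> 'x set" where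
  "set_act act \<pi> A = act \<pi> ` A"

definition fs_subset :: "((atom \<Rightarrow> atom) \<Rightarrow> 'x \<Rightarrow> 'x) \<Rightarrow> 'x set \<Rightarrow> bool" where
  "fs_subset act A \<longleftrightarrow> (\<exists>S. finite S \<and> supports (set_act act) S A)"

text \<open>A letter is a pair (x, b); b = True means the inverse letter x^-1.\<close>

fun reduced :: "('x \<times> bool) list \<Rightarrow> bool" where
  "reduced [] = True"
| "reduced [_] = True"
| "reduced ((x,b) # (y,c) # w) = (\<not> (x = y \<and> b \<noteq> c) \<and> reduced ((y,c) # w))"

fun cancel_cons :: "('x \<times> bool) \<Rightarrow> ('x \<times> bool) list \<Rightarrow> ('x \<times> bool) list" where
  "cancel_cons l [] = [l]"
| "cancel_cons (x,b) ((y,c) # w) = (if x = y \<and> b \<noteq> c then w else (x,b) # (y,c) # w)"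

definition reduce :: "('x \<times> bool) list \<Rightarrow> ('x \<times> bool) list" where
  "reduce w = foldr cancel_cons w []"

definition free_group :: "'x set \<Rightarrow> ('x \<times> bool) list monoid" where
  "free_group X = \<lparr> carrier = {w. (\<forall>(x,b)\<in>set w. x \<in> X) \<and> reduced w},
                    mult = (\<lambda>v w. reduce (v @ w)),
                    one = [] \<rparr>"

definition eval_word :: "('g, 'm) monoid_scheme \<Rightarrow> ('g \<times> bool) list \<Rightarrow> 'g" where
  "eval_word G w = foldr (\<lambda>(x,b) r. (if b then inv\<^bsub>G\<^esub> x else x) \<otimes>\<^bsub>G\<^esub> r) w \<one>\<^bsub>G\<^esub>"

definition freely_generates :: "('g, 'm) monoid_scheme \<Rightarrow> 'g set \<Rightarrow> 'g set \<Rightarrow> bool" where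
  "freely_generates G H S \<longleftrightarrow>
     S \<subseteq> H \<and> eval_word G \<in> iso (free_group S) (G\<lparr>carrier := H\<rparr>)"

definition word_act :: "((atom \<Rightarrow> atom) \<Rightarrow> 'x \<Rightarrow> 'x) \<Rightarrow> (atom \<Rightarrow> atom) \<Rightarrow> ('x \<times> bool) list \<Rightarrow> ('x \<times> bool) list" where
  "word_act act \<pi> w = map (\<lambda>(x,b). (act \<pi> x, b)) w"

end

theory Submission
  imports
    Defs
    "HOL-Algebra.Elementary_Groups"
    "HOL-Combinatorics.Transposition"
    "HOL-Library.Nat_Bijection"
begin

text \<open>
  Let \<open>A\<close> be the nominal set of ordered pairs of atoms and \<open>H \<le> F\<^sub>A\<close> the equivariant
  subgroup of words in which, for every pair \<open>(a, b)\<close>, the exponent sums of \<open>(a, b)\<close>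
  and \<open>(b, a)\<close> cancel. A finitely supported free basis \<open>S\<close> of \<open>H\<close> is invariant under
  the transposition \<open>\<tau>\<close> of two atoms \<open>a \<noteq> b\<close> fresh for \<open>S\<close>, so \<open>\<tau>\<close> acts on
  reduced \<open>S\<close>-words by renaming letters. It inverts \<open>y = (a, b) (b, a)\<^sup>-\<^sup>1 \<in> H\<close>, so
  by freeness the \<open>S\<close>-word \<open>w\<close> of \<open>y\<close> satisfies \<open>\<tau> w = w\<^sup>-\<^sup>1\<close> as words: \<open>w\<close> has
  even length and its \<open>i\<close>-th letters from the left and from the right are mutually
  inverse up to \<open>\<tau>\<close>.
  Since \<open>\<tau>\<close> negates the exponent sum of \<open>(a, b)\<close> on \<open>H\<close>, such mirrored letters make
  equal contributions to the exponent sum of \<open>(a, b)\<close> in \<open>y\<close>, which is therefore even;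
  but it is \<open>1\<close>.
\<close>

section \<open>Reduced words\<close>

definition cancels :: "'x \<times> bool \<Rightarrow> 'x \<times> bool \<Rightarrow> bool" where
  "cancels l m \<longleftrightarrow> m = apsnd Not l"

definition inv_word :: "('x \<times> bool) list \<Rightarrow> ('x \<times> bool) list" where
  "inv_word w = rev (map (apsnd Not) w)"

lemma reduced_Cons_iff: "reduced (l # w) \<longleftrightarrow> reduced w \<and> (w = [] \<or> \<not> cancels l (hd w))"
  by (cases l; cases w) (auto simp: cancels_def)

lemma reduced_append_iff:
  "reduced (u @ v) \<longleftrightarrow> reduced u \<and> reduced v \<and> (u = [] \<or> v = [] \<or> \<not> cancels (last u) (hd v))"
  by (induction u) (auto simp: reduced_Cons_iff)

lemma cancel_cons_eq: "cancel_cons l w = (if w \<noteq> [] \<and> cancels l (hd w) then tl w else l # w)"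
  by (cases l; cases w) (auto simp: cancels_def split: if_splits)

lemma reduce_append: "reduce (u @ v) = foldr cancel_cons u (reduce v)"
  by (simp add: reduce_def)

lemma reduced_cancel_cons: "reduced w \<Longrightarrow> reduced (cancel_cons l w)"
  by (cases w) (auto simp: cancel_cons_eq reduced_Cons_iff)

lemma reduced_foldr_cancel_cons: "reduced v \<Longrightarrow> reduced (foldr cancel_cons u v)"
  by (induction u) (auto simp: reduced_cancel_cons)

lemma reduced_reduce: "reduced (reduce w)"
  by (simp add: reduce_def reduced_foldr_cancel_cons)

lemma reduce_Cons: "reduce (l # w) = cancel_cons l (reduce w)"
  by (simp add: reduce_def)

lemma reduce_eq_self: "reduced w \<Longrightarrow> reduce w = w"
  by (induction w) (auto simp: reduce_Cons reduced_Cons_iff cancel_cons_eq reduce_def)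

lemma cancel_cons_cancel_cons: "reduced w \<Longrightarrow> cancel_cons l (cancel_cons (apsnd Not l) w) = w"
  by (cases l; cases w) (auto simp: cancel_cons_eq cancels_def reduced_Cons_iff)

lemma foldr_cancel_cons_cancel_cons:
  assumes "reduced v"
  shows "foldr cancel_cons (cancel_cons l u) v = cancel_cons l (foldr cancel_cons u v)"
proof (cases "u \<noteq> [] \<and> cancels l (hd u)")
  case True
  then obtain u' where "u = apsnd Not l # u'"
    by (cases u) (auto simp: cancels_def)
  then show ?thesis
    using True cancel_cons_cancel_cons[OF reduced_foldr_cancel_cons[OF assms]]
    by (simp add: cancel_cons_eq)
next
  case False
  then have "cancel_cons l u = l # u"
    unfolding cancel_cons_eq by auto
  then show ?thesis by simp
qed

lemma foldr_cancel_cons_reduce: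
  "reduced v \<Longrightarrow> foldr cancel_cons (reduce u) v = foldr cancel_cons u v"
  by (induction u) (auto simp: reduce_Cons foldr_cancel_cons_cancel_cons reduce_def)

lemma reduce_reduce_append: "reduce (reduce u @ v) = reduce (u @ v)"
  by (simp add: reduce_append foldr_cancel_cons_reduce reduced_reduce)

lemma reduce_append_reduce: "reduce (u @ reduce v) = reduce (u @ v)"
  by (simp add: reduce_append reduce_eq_self reduced_reduce)

lemma set_reduce_subset: "set (reduce w) \<subseteq> set w"
proof (induction w)
  case (Cons l w)
  then show ?case
    by (auto simp: reduce_Cons cancel_cons_eq dest: list.set_sel(2))
qed (simp add: reduce_def)

lemma reduce_append_inv_word: "reduce (w @ inv_word w) = []"
proof (induction w)
  case (Cons l w)
  have "reduce ((l # w) @ inv_word (l # w)) = reduce ([l] @ (w @ inv_word w) @ [apsnd Not l])"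
    by (simp add: inv_word_def)
  also have "\<dots> = reduce ([l] @ reduce (reduce (w @ inv_word w) @ [apsnd Not l]))"
    by (simp only: reduce_append_reduce reduce_reduce_append)
  also have "\<dots> = reduce [l, apsnd Not l]"
    by (simp only: Cons) (simp add: reduce_def)
  also have "\<dots> = []"
    by (simp add: reduce_def cancel_cons_eq cancels_def)
  finally show ?case .
qed (simp add: inv_word_def reduce_def)

lemma inv_word_inv_word [simp]: "inv_word (inv_word w) = w"
  by (induction w) (auto simp: inv_word_def)

lemma reduced_inv_word: "reduced w \<Longrightarrow> reduced (inv_word w)"
proof (induction w)
  case (Cons l w)
  then show ?case
    by (cases w) (auto simp: inv_word_def reduced_append_iff reduced_Cons_iff cancels_def)
qed (simp add: inv_word_def)

section \<open>Free groups\<close>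

lemma fst_set_inv_word [simp]: "fst ` set (inv_word w) = fst ` set w"
  by (force simp: inv_word_def)

lemma carrier_free_group: "w \<in> carrier (free_group A) \<longleftrightarrow> fst ` set w \<subseteq> A \<and> reduced w"
  by (auto simp: free_group_def)

lemma mult_free_group [simp]: "u \<otimes>\<^bsub>free_group A\<^esub> v = reduce (u @ v)"
  by (simp add: free_group_def)

lemma one_free_group [simp]: "\<one>\<^bsub>free_group A\<^esub> = []"
  by (simp add: free_group_def)

lemma reduce_in_carrier: "fst ` set w \<subseteq> A \<Longrightarrow> reduce w \<in> carrier (free_group A)"
  using set_reduce_subset[of w] by (auto simp: carrier_free_group reduced_reduce)

lemma inv_word_in_carrier:
  "w \<in> carrier (free_group A) \<Longrightarrow> inv_word w \<in> carrier (free_group A)"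
  by (simp add: carrier_free_group reduced_inv_word)

lemma group_free_group: "group (free_group A)"
proof (rule groupI)
  fix u v
  assume "u \<in> carrier (free_group A)" "v \<in> carrier (free_group A)"
  then show "u \<otimes>\<^bsub>free_group A\<^esub> v \<in> carrier (free_group A)"
    using reduce_in_carrier[of "u @ v" A] by (auto simp: carrier_free_group)
next
  fix u
  assume "u \<in> carrier (free_group A)"
  then show "\<exists>v\<in>carrier (free_group A). v \<otimes>\<^bsub>free_group A\<^esub> u = \<one>\<^bsub>free_group A\<^esub>"
    using reduce_append_inv_word[of "inv_word u"] inv_word_in_carrier by fastforce
qed (auto simp: carrier_free_group reduce_eq_self reduce_reduce_append reduce_append_reduce)

lemma inv_free_group:
  "w \<in> carrier (free_group A) \<Longrightarrow> inv\<^bsub>free_group A\<^esub> w = inv_word w"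
  by (rule group.inv_equality[OF group_free_group])
    (use reduce_append_inv_word[of "inv_word w"] inv_word_in_carrier in auto)

lemma cancels_apfst_iff:
  "inj_on g {fst l, fst m} \<Longrightarrow> cancels (apfst g l) (apfst g m) \<longleftrightarrow> cancels l m"
  by (cases l; cases m) (auto simp: cancels_def inj_on_def)

lemma reduced_map_apfst:
  "inj_on g (fst ` set w) \<Longrightarrow> reduced (map (apfst g) w) \<longleftrightarrow> reduced w"
proof (induction w)
  case (Cons l w)
  have "cancels (apfst g l) (apfst g (hd w)) \<longleftrightarrow> cancels l (hd w)" if "w \<noteq> []"
    by (rule cancels_apfst_iff, rule inj_on_subset[OF Cons.prems]) (use that in auto)
  then show ?case
    using Cons by (auto simp: reduced_Cons_iff hd_map inj_on_subset)
qed simp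

lemma map_apfst_cancel_cons:
  assumes "inj_on g (fst ` set (l # w))"
  shows "map (apfst g) (cancel_cons l w) = cancel_cons (apfst g l) (map (apfst g) w)"
proof (cases w)
  case (Cons m w')
  then have "cancels (apfst g l) (apfst g m) \<longleftrightarrow> cancels l m"
    by (intro cancels_apfst_iff inj_on_subset[OF assms]) auto
  then show ?thesis
    by (simp add: Cons cancel_cons_eq)
qed simp

lemma map_apfst_reduce:
  "inj_on g (fst ` set w) \<Longrightarrow> map (apfst g) (reduce w) = reduce (map (apfst g) w)"
proof (induction w)
  case (Cons l w)
  have "inj_on g (fst ` set (l # reduce w))"
    using Cons.prems set_reduce_subset[of w] by (auto intro: inj_on_subset)
  then show ?case
    using Cons by (simp add: reduce_Cons map_apfst_cancel_cons inj_on_subset)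
qed (simp add: reduce_def)

lemma map_apfst_inv_word: "map (apfst g) (inv_word w) = inv_word (map (apfst g) w)"
  by (simp add: inv_word_def rev_map)

lemma map_apfst_in_carrier:
  assumes "inj_on g A" "g ` A \<subseteq> B" "w \<in> carrier (free_group A)"
  shows "map (apfst g) w \<in> carrier (free_group B)"
  using assms by (force simp: carrier_free_group reduced_map_apfst inj_on_subset)

lemma hom_map_apfst_free_group:
  assumes "inj_on g A" "g ` A \<subseteq> B"
  shows "map (apfst g) \<in> hom (free_group A) (free_group B)"
proof (rule homI)
  fix u v
  assume "u \<in> carrier (free_group A)" "v \<in> carrier (free_group A)"
  then have "inj_on g (fst ` set (u @ v))"
    by (intro inj_on_subset[OF assms(1)]) (auto simp: carrier_free_group)
  then show "map (apfst g) (u \<otimes>\<^bsub>free_group A\<^esub> v) =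
      map (apfst g) u \<otimes>\<^bsub>free_group B\<^esub> map (apfst g) v"
    by (simp add: map_apfst_reduce)
qed (use assms map_apfst_in_carrier in blast)

section \<open>Evaluation of words\<close>

lemma eval_word_Nil [simp]: "eval_word G [] = \<one>\<^bsub>G\<^esub>"
  by (simp add: eval_word_def)

lemma eval_word_Cons [simp]:
  "eval_word G ((x, b) # w) = (if b then inv\<^bsub>G\<^esub> x else x) \<otimes>\<^bsub>G\<^esub> eval_word G w"
  by (simp add: eval_word_def)

context group
begin

lemma eval_word_closed: "fst ` set w \<subseteq> carrier G \<Longrightarrow> eval_word G w \<in> carrier G"
  by (induction w) auto

lemma eval_word_append:
  "fst ` set u \<subseteq> carrier G \<Longrightarrow> fst ` set v \<subseteq> carrier G \<Longrightarrow>
   eval_word G (u @ v) = eval_word G u \<otimes> eval_word G v"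
  by (induction u) (auto simp: eval_word_closed m_assoc)

lemma eval_word_inv_word:
  "fst ` set w \<subseteq> carrier G \<Longrightarrow> eval_word G (inv_word w) = inv (eval_word G w)"
proof (induction w)
  case (Cons l w)
  obtain x b where l: "l = (x, b)" by fastforce
  have "eval_word G (inv_word (l # w)) = eval_word G (inv_word w @ [(x, \<not> b)])"
    by (simp add: inv_word_def l)
  also have "\<dots> = inv (eval_word G w) \<otimes> (if b then x else inv x)"
    using Cons by (simp add: eval_word_append l)
  also have "\<dots> = inv (eval_word G (l # w))"
    using Cons.prems by (simp add: l inv_mult_group eval_word_closed)
  finally show ?case .
qed (simp add: inv_word_def)

end

lemma (in group_hom) eval_word_hom:
  "fst ` set w \<subseteq> carrier G \<Longrightarrow> h (eval_word G w) = eval_word H (map (apfst h) w)"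
  by (induction w) (auto simp: G.eval_word_closed)

lemma even_eval_word_if_negation_inverts:
  assumes "map (apfst uminus) u = inv_word u"
  shows "even (eval_word integer_group u)"
proof -
  interpret Z: group integer_group by simp
  have neg: "eval_word integer_group (map (apfst uminus) v) = - eval_word integer_group v"
    for v :: "(int \<times> bool) list"
    by (induction v) auto
  define k where "k = length u div 2"
  consider "length u = 2 * k + 1" | "length u = 2 * k"
    unfolding k_def by linarith
  then show ?thesis
  proof cases
    case 1
    have "map (apfst uminus) u ! k = inv_word u ! k"
      using assms by simp
    then have "apfst uminus (u ! k) = apsnd Not (u ! k)"
      using 1 by (simp add: inv_word_def rev_nth)
    then show ?thesis
      by (metis snd_apfst snd_apsnd)
  next
    case 2
    have "take k (map (apfst uminus) u) = take k (inv_word u)"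
      using assms by simp
    then have "map (apfst uminus) (take k u) = inv_word (drop k u)"
      using 2 by (simp add: inv_word_def take_map take_rev drop_map)
    then have "eval_word integer_group (take k u) = eval_word integer_group (drop k u)"
      using neg[of "take k u"] Z.eval_word_inv_word[of "drop k u"] by simp
    moreover have "eval_word integer_group u =
        eval_word integer_group (take k u) + eval_word integer_group (drop k u)"
      using Z.eval_word_append[of "take k u" "drop k u"] by simp
    ultimately show ?thesis by simp
  qed
qed

lemma even_hom_of_inverted_element:
  assumes "group G" "subgroup H G" and free: "freely_generates G H S"
    and \<sigma>: "\<sigma> \<in> hom G G" "inj_on \<sigma> S" "\<sigma> ` S \<subseteq> S"
    and p: "p \<in> hom G integer_group" "\<And>s. s \<in> S \<Longrightarrow> p (\<sigma> s) = - p s"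
    and y: "y \<in> H" "\<sigma> y = inv\<^bsub>G\<^esub> y"
  shows "even (p y)"
proof -
  interpret G: group G by fact
  interpret \<sigma>: group_hom G G \<sigma>
    using \<sigma>(1) by (simp add: group_hom_def group_hom_axioms_def \<open>group G\<close>)
  interpret p: group_hom G integer_group p
    using p(1) by (simp add: group_hom_def group_hom_axioms_def \<open>group G\<close>)
  have bij: "bij_betw (eval_word G) (carrier (free_group S)) H"
    using free by (simp add: freely_generates_def iso_def)
  then obtain w where w: "w \<in> carrier (free_group S)" "eval_word G w = y"
    using y(1) by (metis bij_betw_imp_surj_on imageE)
  have letters: "fst ` set w \<subseteq> S"
    using w(1) by (simp add: carrier_free_group)
  moreover have "S \<subseteq> carrier G"
    using free subgroup.subset[OF assms(2)] by (auto simp: freely_generates_def)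
  ultimately have letters_G: "fst ` set w \<subseteq> carrier G"
    by blast
  txt \<open>Freeness turns \<open>\<sigma> y = y\<^sup>-\<^sup>1\<close> into an identity of reduced words.\<close>
  have "eval_word G (map (apfst \<sigma>) w) = eval_word G (inv_word w)"
    using letters_G w(2) y(2) by (simp flip: \<sigma>.eval_word_hom add: G.eval_word_inv_word)
  moreover have "map (apfst \<sigma>) w \<in> carrier (free_group S)"
    using \<sigma>(2,3) w(1) by (rule map_apfst_in_carrier)
  moreover have "inv_word w \<in> carrier (free_group S)"
    using w(1) by (rule inv_word_in_carrier)
  ultimately have inverted: "map (apfst \<sigma>) w = inv_word w"
    using bij w(1) by (auto simp: bij_betw_def inj_on_def)
  have "map (apfst uminus) (map (apfst p) w) = map (apfst p) (map (apfst \<sigma>) w)"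
    using letters p(2) by auto
  also have "\<dots> = inv_word (map (apfst p) w)"
    by (simp add: inverted map_apfst_inv_word)
  finally have "even (eval_word integer_group (map (apfst p) w))"
    by (rule even_eval_word_if_negation_inverts)
  then show ?thesis
    using p.eval_word_hom[OF letters_G] w(2) by simp
qed

section \<open>The counterexample\<close>

definition exponent_sum :: "'x \<Rightarrow> ('x \<times> bool) list \<Rightarrow> int" where
  "exponent_sum x w = sum_list (map (\<lambda>(y, b). if y = x then (if b then -1 else 1) else 0) w)"

lemma exponent_sum_Nil [simp]: "exponent_sum x [] = 0"
  by (simp add: exponent_sum_def)

lemma exponent_sum_Cons [simp]:
  "exponent_sum x ((y, b) # w) = (if y = x then (if b then -1 else 1) else 0) + exponent_sum x w"
  by (simp add: exponent_sum_def)

lemma exponent_sum_append [simp]: "exponent_sum x (u @ v) = exponent_sum x u + exponent_sum x v"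
  by (simp add: exponent_sum_def)

lemma exponent_sum_cancel_cons: "exponent_sum x (cancel_cons l w) = exponent_sum x (l # w)"
  by (cases l; cases w) (auto simp: cancel_cons_eq cancels_def)

lemma exponent_sum_reduce [simp]: "exponent_sum x (reduce w) = exponent_sum x w"
proof (induction w)
  case (Cons l w)
  then show ?case
    by (cases l) (simp add: reduce_Cons exponent_sum_cancel_cons)
qed (simp add: reduce_def)

lemma exponent_sum_inv_word [simp]: "exponent_sum x (inv_word w) = - exponent_sum x w"
  by (induction w) (auto simp: inv_word_def)

lemma exponent_sum_map_apfst:
  "inj g \<Longrightarrow> exponent_sum (g x) (map (apfst g) w) = exponent_sum x w"
  by (induction w) (auto simp: inj_eq)

lemma hom_exponent_sum: "exponent_sum x \<in> hom (free_group A) integer_group"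
  by (rule homI) simp_all

text \<open>The nominal set of the counterexample is the set of ordered pairs of atoms, coded by
  \<^const>\<open>prod_encode\<close> because the theorem only quantifies over sets of natural numbers.\<close>

definition pair_act :: "(atom \<Rightarrow> atom) \<Rightarrow> nat \<Rightarrow> nat" where
  "pair_act \<pi> n = prod_encode (map_prod \<pi> \<pi> (prod_decode n))"

definition pair_swap :: "nat \<Rightarrow> nat" where
  "pair_swap n = prod_encode (prod.swap (prod_decode n))"

definition swap_balanced :: "(nat \<times> bool) list set" where
  "swap_balanced =
    {w \<in> carrier (free_group UNIV). \<forall>x. exponent_sum (pair_swap x) w = - exponent_sum x w}"

lemma pair_act_prod_encode [simp]: "pair_act \<pi> (prod_encode (a, b)) = prod_encode (\<pi> a, \<pi> b)"
  by (simp add: pair_act_def)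

lemma pair_swap_prod_encode [simp]: "pair_swap (prod_encode (a, b)) = prod_encode (b, a)"
  by (simp add: pair_swap_def)

lemma pair_swap_pair_swap [simp]: "pair_swap (pair_swap x) = x"
  by (simp add: pair_swap_def)

lemma pair_act_pair_swap: "pair_act \<pi> (pair_swap x) = pair_swap (pair_act \<pi> x)"
  by (cases "prod_decode x") (simp add: pair_act_def pair_swap_def)

lemma inj_pair_act:
  assumes "inj \<pi>"
  shows "inj (pair_act \<pi>)"
proof (rule injI)
  fix x y
  assume "pair_act \<pi> x = pair_act \<pi> y"
  then have "map_prod \<pi> \<pi> (prod_decode x) = map_prod \<pi> \<pi> (prod_decode y)"
    by (simp add: pair_act_def)
  then show "x = y"
    using prod.inj_map[OF assms assms] by (simp add: inj_eq)
qed

lemma pair_act_inv_into: "surj \<pi> \<Longrightarrow> pair_act \<pi> (pair_act (inv_into UNIV \<pi>) x) = x"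
  by (simp add: pair_act_def map_prod_def split_beta surj_f_inv_f)

lemma surj_pair_act: "surj \<pi> \<Longrightarrow> surj (pair_act \<pi>)"
  by (metis pair_act_inv_into surjI)

lemma nominal_set_pair_act: "nominal_set UNIV pair_act"
  unfolding nominal_set_def perm_set_def
proof (intro conjI ballI allI impI)
  fix x
  show "\<exists>S. finite S \<and> supports pair_act S x"
    by (rule exI[of _ "{fst (prod_decode x), snd (prod_decode x)}"])
      (simp add: supports_def pair_act_def map_prod_def split_beta)
qed (auto simp: pair_act_def map_prod_def split_beta)

lemma subgroup_swap_balanced: "subgroup swap_balanced (free_group UNIV)"
proof (rule group.subgroupI[OF group_free_group])
  show "swap_balanced \<subseteq> carrier (free_group UNIV)"
    by (auto simp: swap_balanced_def)
  show "swap_balanced \<noteq> {}"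
    by (auto simp: swap_balanced_def carrier_free_group intro!: exI[of _ "[]"])
next
  fix u
  assume "u \<in> swap_balanced"
  then show "inv\<^bsub>free_group UNIV\<^esub> u \<in> swap_balanced"
    by (auto simp: swap_balanced_def inv_free_group inv_word_in_carrier)
next
  fix u v
  assume "u \<in> swap_balanced" "v \<in> swap_balanced"
  then show "u \<otimes>\<^bsub>free_group UNIV\<^esub> v \<in> swap_balanced"
    using set_reduce_subset[of "u @ v"] by (auto simp: swap_balanced_def carrier_free_group reduced_reduce)
qed

lemma word_act_eq_map_apfst: "word_act act \<pi> = map (apfst (act \<pi>))"
  by (auto simp: word_act_def fun_eq_iff)

lemma word_act_pair_act_swap_balanced:
  assumes "bij \<pi>" "w \<in> swap_balanced"
  shows "word_act pair_act \<pi> w \<in> swap_balanced"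
proof -
  have inj: "inj (pair_act \<pi>)" and surj: "surj (pair_act \<pi>)"
    using assms(1) by (simp_all add: bij_is_inj bij_is_surj inj_pair_act surj_pair_act)
  have "exponent_sum (pair_swap x) (map (apfst (pair_act \<pi>)) w) =
      - exponent_sum x (map (apfst (pair_act \<pi>)) w)" for x
  proof -
    obtain z where "x = pair_act \<pi> z"
      using surj by blast
    then show ?thesis
      using assms(2)
      by (simp add: swap_balanced_def exponent_sum_map_apfst[OF inj] flip: pair_act_pair_swap)
  qed
  moreover have "map (apfst (pair_act \<pi>)) w \<in> carrier (free_group UNIV)"
    using assms(2) inj by (auto simp: swap_balanced_def intro: map_apfst_in_carrier)
  ultimately show ?thesis
    by (simp add: swap_balanced_def word_act_eq_map_apfst)
qed

lemma fs_subset_swap_balanced: "fs_subset (word_act pair_act) swap_balanced"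
  unfolding fs_subset_def supports_def set_act_def
proof (intro exI[of _ "{}"] conjI allI impI)
  fix \<pi>
  assume "fsperm \<pi> \<and> (\<forall>a\<in>{}. \<pi> a = a)"
  then have \<pi>: "bij \<pi>" "bij (inv_into UNIV \<pi>)"
    by (simp_all add: fsperm_def bij_imp_bij_inv)
  show "word_act pair_act \<pi> ` swap_balanced = swap_balanced"
  proof
    show "word_act pair_act \<pi> ` swap_balanced \<subseteq> swap_balanced"
      using \<pi>(1) word_act_pair_act_swap_balanced by blast
    show "swap_balanced \<subseteq> word_act pair_act \<pi> ` swap_balanced"
    proof
      fix w
      assume "w \<in> swap_balanced"
      moreover have "word_act pair_act \<pi> (word_act pair_act (inv_into UNIV \<pi>) w) = w"
        using \<pi>(1) by (induction w) (auto simp: word_act_def pair_act_inv_into bij_is_surj)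
      ultimately show "w \<in> word_act pair_act \<pi> ` swap_balanced"
        using word_act_pair_act_swap_balanced[OF \<pi>(2)] by (metis imageI)
    qed
  qed
qed simp

lemma fsperm_transpose: "fsperm (Transposition.transpose a b)"
proof -
  have "{x. Transposition.transpose a b x \<noteq> x} \<subseteq> {a, b}"
    by (auto simp: Transposition.transpose_def)
  then show ?thesis
    by (auto simp: fsperm_def intro: finite_subset)
qed

lemma swap_balanced_has_no_transposition_invariant_free_basis:
  assumes "a \<noteq> b" and free: "freely_generates (free_group UNIV) swap_balanced S"
    and invariant: "word_act pair_act (Transposition.transpose a b) ` S \<subseteq> S"
  shows False
proof -
  define g where "g = pair_act (Transposition.transpose a b)"
  define x where "x = prod_encode (a, b)"
  define y where "y = [(x, False), (pair_swap x, True)]"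
  have inj_g: "inj g"
    by (simp add: g_def inj_pair_act)
  have g_x: "g x = pair_swap x" "g (pair_swap x) = x"
    by (simp_all add: g_def x_def)
  have x_neq: "pair_swap x \<noteq> x"
    using \<open>a \<noteq> b\<close> by (simp add: x_def)
  have y: "y \<in> swap_balanced"
  proof -
    have "exponent_sum (pair_swap z) y = - exponent_sum z y" for z
      using x_neq by (auto simp: y_def) (metis pair_swap_pair_swap)
    then show ?thesis
      using x_neq by (simp add: swap_balanced_def carrier_free_group y_def)
  qed
  have "even (exponent_sum x y)"
  proof (rule even_hom_of_inverted_element[OF group_free_group subgroup_swap_balanced free])
    show "map (apfst g) \<in> hom (free_group UNIV) (free_group UNIV)"
      using inj_g by (simp add: hom_map_apfst_free_group)
    show "inj_on (map (apfst g)) S"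
      by (rule inj_on_subset[of _ UNIV]) (simp_all add: inj_g)
    show "map (apfst g) ` S \<subseteq> S"
      using invariant by (simp add: g_def word_act_eq_map_apfst)
    show "exponent_sum x \<in> hom (free_group UNIV) integer_group"
      by (rule hom_exponent_sum)
    show "exponent_sum x (map (apfst g) s) = - exponent_sum x s" if "s \<in> S" for s
    proof -
      have "s \<in> swap_balanced"
        using that free by (auto simp: freely_generates_def)
      then show ?thesis
        using exponent_sum_map_apfst[OF inj_g, of "pair_swap x" s] by (simp add: g_x swap_balanced_def)
    qed
    show "y \<in> swap_balanced"
      by (fact y)
    show "map (apfst g) y = inv\<^bsub>free_group UNIV\<^esub> y"
      using y by (simp add: swap_balanced_def inv_free_group inv_word_def y_def g_x)
  qed
  moreover have "exponent_sum x y = 1"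
    using x_neq by (simp add: y_def)
  ultimately show False
    by simp
qed

lemma swap_balanced_has_no_fs_free_basis:
  assumes "fs_subset (word_act pair_act) S"
  shows "\<not> freely_generates (free_group UNIV) swap_balanced S"
proof
  assume free: "freely_generates (free_group UNIV) swap_balanced S"
  obtain T where "finite T" and T: "supports (set_act (word_act pair_act)) T S"
    using assms unfolding fs_subset_def by blast
  obtain a b :: atom where "a \<notin> T" "b \<notin> T" "a \<noteq> b"
    using \<open>finite T\<close> by (metis ex_new_if_finite finite_insert infinite_UNIV_nat insertCI)
  then have "\<forall>c\<in>T. Transposition.transpose a b c = c"
    by (auto simp: Transposition.transpose_def)
  then have "word_act pair_act (Transposition.transpose a b) ` S = S"
    using T fsperm_transpose unfolding supports_def set_act_def by blast
  then show False
    using swap_balanced_has_no_transposition_invariant_free_basis[OF \<open>a \<noteq> b\<close> free] by simp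
qed

theorem theorem6p3:
  shows "\<not> (\<forall>(A :: nat set) act. nominal_set A act \<longrightarrow>
            (\<forall>H. subgroup H (free_group A) \<and> fs_subset (word_act act) H \<longrightarrow>
               (\<exists>S. S \<subseteq> H \<and> fs_subset (word_act act) S \<and>
                    freely_generates (free_group A) H S)))"
  using nominal_set_pair_act subgroup_swap_balanced fs_subset_swap_balanced
    swap_balanced_has_no_fs_free_basis
  by blast

end
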